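(* Let $U$ and $V$ be finite-dimensional vector spaces over a field $\mathbb{K}$. Let $\mathcal{T}$ be an additive subgroup of $\mathcal{L}(U,V)$ that contains a linear subspace $\mathcal{S}$ with $\operatorname{codim}_{\mathcal{L}(U,V)}\mathcal{S}\leq\dim V-2$, and let $F:\mathcal{T}\to V$ be a range-compatible group homomorphism. Then $F$ is local: there exists $x\in U$ with $F(t)=t(x)$ for all $t\in\mathcal{T}$.
   Context: A map $F:\mathcal{T}\to V$ on a subset $\mathcal{T}\subset\mathcal{L}(U,V)$ is range-compatible when $F(t)\in\operatorname{im}t$ for all $t\in\mathcal{T}$. *)

theory Defs
  imports "HOL-Analysis.Analysis"
begin

text \<open>Linear maps U -> V with U = K^n, V = K^m are represented by m x n matrices
  (type 'a^'n^'m), acting by matrix-vector multiplication.\<close>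

definition mat_scale :: "'a::field \<Rightarrow> 'a^'n^'m \<Rightarrow> 'a^'n^'m" where
  "mat_scale c M = (\<chi> i j. c * M $ i $ j)"

definition range_compatible :: "('a::field^'n^'m) set \<Rightarrow> ('a^'n^'m \<Rightarrow> 'a^'m) \<Rightarrow> bool" where
  "range_compatible T F \<longleftrightarrow> (\<forall>t\<in>T. F t \<in> range (\<lambda>x. t *v x))"

definition additive_subgroup :: "('a::ab_group_add) set \<Rightarrow> bool" where
  "additive_subgroup T \<longleftrightarrow> 0 \<in> T \<and> (\<forall>s\<in>T. \<forall>t\<in>T. s + t \<in> T) \<and> (\<forall>t\<in>T. - t \<in> T)"

end

theory Submission
  imports Defs
begin

text \<open>For a subspace \<open>Y\<close> of \<open>V\<close> put \<open>S\<^sub>Y = S + L(U, Y)\<close>. One shows, by induction on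
  \<open>dim V - dim Y\<close>, that an additive \<open>F\<close> on \<open>S\<close> with \<open>F s \<in> s(U) + Y\<close> for all \<open>s\<close> is local
  modulo \<open>Y\<close> as soon as \<open>codim S\<^sub>Y \<le> codim Y - 2\<close>.
  If \<open>S\<^sub>Y\<close> is all of \<open>L(U, V)\<close>, pick for each column index \<open>j\<close> and each \<open>y\<close> some
  \<open>\<sigma>\<^sub>j(y) \<in> S\<close> congruent to the rank-one map \<open>y e\<^sub>j\<^sup>T\<close> modulo \<open>L(U, Y)\<close>. Then
  \<open>y \<mapsto> F (\<sigma>\<^sub>j(y))\<close> is additive modulo \<open>Y\<close> and has every vector as an eigenvector modulo \<open>Y\<close>,
  so it is a scalar \<open>a\<^sub>j\<close> modulo \<open>Y\<close> because \<open>codim Y \<ge> 2\<close>; the vector \<open>(a\<^sub>j)\<close> is local.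
  Otherwise some \<open>y e\<^sub>j\<^sup>T\<close> lies outside \<open>S\<^sub>Y\<close>, and adding such a \<open>y\<close> to \<open>Y\<close> raises
  \<open>dim S\<^sub>Y\<close>, so the induction hypothesis gives local vectors modulo \<open>Y + K y\<^sub>1\<close> and
  \<open>Y + K y\<^sub>2\<close> for two such vectors independent modulo \<open>Y\<close>. A dimension count forces the two
  vectors to coincide, and then they are local modulo \<open>(Y + K y\<^sub>1) \<inter> (Y + K y\<^sub>2) = Y\<close>.
  The case \<open>Y = 0\<close> settles \<open>S\<close>. For \<open>t \<in> T - S\<close>, the subspace case applied to
  \<open>S + K t\<close> and the linear map \<open>s + c t \<mapsto> s x + c F t\<close>, which is range compatible because
  \<open>F\<close> is, shows \<open>F t = t x\<close>.\<close>

section \<open>Linear algebra modulo a subspace\<close>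

context vector_space
begin

lemma in_span_insert_subspace_iff:
  assumes "subspace Y"
  shows "v \<in> span (insert y Y) \<longleftrightarrow> (\<exists>k. v - scale k y \<in> Y)"
  by (metis assms span_breakdown_eq span_eq_iff)

lemma coeffs_eq_0_if_comb_in_subspace:
  assumes Y: "subspace Y" and y1: "y1 \<notin> Y" and y: "y \<notin> span (insert y1 Y)"
    and comb: "scale a y + scale b y1 \<in> Y"
  shows "a = 0 \<and> b = 0"
proof
  show a: "a = 0"
  proof (rule ccontr)
    assume "a \<noteq> 0"
    then have "y - scale (- b / a) y1 = scale (1 / a) (scale a y + scale b y1)"
      by (simp add: algebra_simps)
    also have "\<dots> \<in> Y" using comb Y subspace_scale by blast
    finally show False using y in_span_insert_subspace_iff[OF Y] by blast
  qed
  show "b = 0"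
  proof (rule ccontr)
    assume "b \<noteq> 0"
    then have "y1 = scale (1 / b) (scale a y + scale b y1)" using a by simp
    also have "\<dots> \<in> Y" using comb Y subspace_scale by blast
    finally show False using y1 by simp
  qed
qed

lemma in_subspace_if_in_span_insert_both:
  assumes Y: "subspace Y" and y2: "y2 \<notin> span (insert y1 Y)"
    and v1: "v \<in> span (insert y1 Y)" and v2: "v \<in> span (insert y2 Y)"
  shows "v \<in> Y"
proof -
  obtain k where k: "v - scale k y2 \<in> Y" using v2 in_span_insert_subspace_iff[OF Y] by blast
  have "scale k y2 = v - (v - scale k y2)" by simp
  also have "\<dots> \<in> span (insert y1 Y)" using span_diff[OF v1 span_base[of "v - scale k y2"]] k by simp
  finally have "k = 0" using y2 span_scale[of "scale k y2" "insert y1 Y" "1 / k"] by (cases "k = 0") auto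
  then show ?thesis using k by simp
qed

lemma scalar_mod_subspace_if_all_eigen:
  assumes Y: "subspace Y" and y1: "y1 \<notin> Y" and y2: "y2 \<notin> span (insert y1 Y)"
    and eigen: "\<And>y. \<exists>c. g y - scale c y \<in> Y"
    and additive: "\<And>y y'. g (y + y') - g y - g y' \<in> Y"
  shows "\<exists>a. \<forall>y. g y - scale a y \<in> Y"
proof -
  obtain a where a: "g y1 - scale a y1 \<in> Y" using eigen by blast
  have outside: "g y - scale a y \<in> Y" if y: "y \<notin> span (insert y1 Y)" for y
  proof -
    obtain b where b: "g y - scale b y \<in> Y" using eigen by blast
    obtain c where c: "g (y + y1) - scale c (y + y1) \<in> Y" using eigen by blast
    have "scale (c - b) y + scale (c - a) y1 =
        (g y - scale b y) + (g y1 - scale a y1) + (g (y + y1) - g y - g y1) - (g (y + y1) - scale c (y + y1))"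
      by (simp add: algebra_simps)
    also have "\<dots> \<in> Y" by (rule subspace_diff[OF Y subspace_add[OF Y subspace_add[OF Y b a] additive] c])
    finally have "c - b = 0 \<and> c - a = 0" by (rule coeffs_eq_0_if_comb_in_subspace[OF Y y1 y])
    then have "a = b" by (metis right_minus_eq)
    then show ?thesis using b by simp
  qed
  have "g y - scale a y \<in> Y" for y
  proof (cases "y \<in> span (insert y1 Y)")
    case True
    then have "y + y2 \<notin> span (insert y1 Y)"
      using y2 span_diff[of "y + y2" _ y] by auto
    then have "(g (y + y2) - scale a (y + y2)) - (g y2 - scale a y2) - (g (y + y2) - g y - g y2) \<in> Y"
      by (rule subspace_diff[OF Y subspace_diff[OF Y outside outside[OF y2]] additive])
    then show ?thesis by (simp add: algebra_simps)
  qed (use outside in blast)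
  then show ?thesis by blast
qed

lemma span_insert_coordinate:
  assumes S: "subspace S" and t: "t \<notin> S"
  obtains coord where "\<And>u. u \<in> span (insert t S) \<Longrightarrow> u - scale (coord u) t \<in> S"
    and "\<And>u c. u - scale c t \<in> S \<Longrightarrow> coord u = c"
    and "\<And>u v. u \<in> span (insert t S) \<Longrightarrow> v \<in> span (insert t S)
      \<Longrightarrow> coord (u + v) = coord u + coord v"
proof -
  define coord where "coord u = (THE c. u - scale c t \<in> S)" for u
  have unique: "c = c'" if "u - scale c t \<in> S" "u - scale c' t \<in> S" for u c c'
  proof -
    have "scale (c' - c) t \<in> S"
      using subspace_diff[OF S that] by (simp add: algebra_simps)
    then show ?thesis
      using subspace_scale[OF S, of "scale (c' - c) t" "1 / (c' - c)"] t by (cases "c = c'") auto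
  qed
  have coord_eq: "coord u = c" if "u - scale c t \<in> S" for u c
    unfolding coord_def using that unique by blast
  have coord_S: "u - scale (coord u) t \<in> S" if "u \<in> span (insert t S)" for u
    using that coord_eq in_span_insert_subspace_iff[OF S] by auto
  have "coord (u + v) = coord u + coord v"
    if "u \<in> span (insert t S)" "v \<in> span (insert t S)" for u v
  proof (rule coord_eq)
    have "u + v - scale (coord u + coord v) t = (u - scale (coord u) t) + (v - scale (coord v) t)"
      by (simp add: algebra_simps)
    also have "\<dots> \<in> S" using subspace_add[OF S coord_S coord_S] that .
    finally show "u + v - scale (coord u + coord v) t \<in> S" .
  qed
  with coord_S coord_eq show ?thesis by (rule that)
qed

end

context module
begin

lemma additive_on_subspace_sum:
  fixes F :: "'b \<Rightarrow> 'c::ab_group_add"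
  assumes S: "subspace S" and F_add: "\<forall>u\<in>S. \<forall>v\<in>S. F (u + v) = F u + F v"
    and "finite A" and "\<And>i. i \<in> A \<Longrightarrow> u i \<in> S"
  shows "F (\<Sum>i\<in>A. u i) = (\<Sum>i\<in>A. F (u i))"
  using assms(3,4)
proof (induction A rule: finite_induct)
  case empty
  have "F (0 + 0) = F 0 + F 0" using F_add subspace_0[OF S] by blast
  then show ?case by simp
next
  case (insert i A)
  then have "(\<Sum>i\<in>A. u i) \<in> S" by (intro subspace_sum[OF S]) auto
  then show ?case using insert F_add by simp
qed

end

section \<open>Matrices as a vector space\<close>

interpretation mat: vector_space "mat_scale :: 'a::field \<Rightarrow> 'a^'n^'m \<Rightarrow> 'a^'n^'m"
  by unfold_locales (simp_all add: mat_scale_def vec_eq_iff algebra_simps)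

definition outer_prod :: "'a::field^'m \<Rightarrow> 'a^'n \<Rightarrow> 'a^'n^'m" where
  "outer_prod y p = (\<chi> i j. y$i * p$j)"

lemma outer_prod_add_left: "outer_prod (y + y') p = outer_prod y p + outer_prod y' p"
  by (simp add: outer_prod_def vec_eq_iff algebra_simps)

lemma outer_prod_axis_mult_vec: "outer_prod y (axis j 1) *v x = x$j *s y"
proof -
  have "column i (outer_prod y (axis j 1)) = (if i = j then y else 0)" for i
    by (simp add: column_def outer_prod_def axis_def vec_eq_iff)
  then show ?thesis by (simp add: matrix_mult_sum if_distrib[of "(*s) _"] cong: if_cong)
qed

lemma mat_scale_mult_vec: "mat_scale c A *v x = c *s (A *v x)"
  by (simp add: mat_scale_def matrix_vector_mult_def vec_eq_iff sum_distrib_left algebra_simps)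

lemma matrix_eq_sum_outer_prod_column: "A = (\<Sum>j\<in>UNIV. outer_prod (column j A) (axis j 1))"
  by (simp add: vec_eq_iff sum_component outer_prod_def column_def axis_def if_distrib sum.delta'
      cong: if_cong)

lemma matrix_eq_sum_matrix_units:
  "A = (\<Sum>i\<in>UNIV. \<Sum>j\<in>UNIV. mat_scale (A$i$j) (outer_prod (axis i 1) (axis j 1)))"
  by (simp add: vec_eq_iff sum_component mat_scale_def outer_prod_def axis_def if_distrib[of "(*) _"]
      sum.delta' cong: if_cong)

context finite_dimensional_vector_space
begin

lemma subspace_eq_UNIV_iff_dim_le:
  assumes "subspace W"
  shows "W = UNIV \<longleftrightarrow> dim (UNIV :: 'b set) \<le> dim W"
  by (metis assms antisym dim_UNIV dim_eq_full dim_subset_UNIV dimension_def span_eq_iff)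

lemma obtain_pair_independent_mod_subspace:
  assumes Y: "subspace Y" and codim: "dim Y + 2 \<le> dim (UNIV :: 'b set)"
  obtains y1 y2 where "y1 \<notin> Y" and "y2 \<notin> span (insert y1 Y)"
proof -
  obtain y1 where y1: "y1 \<notin> Y" using codim subspace_eq_UNIV_iff_dim_le[OF Y] by auto
  then have "dim (span (insert y1 Y)) = dim Y + 1"
    by (simp add: dim_insert span_eq_iff[THEN iffD2, OF Y])
  then obtain y2 where "y2 \<notin> span (insert y1 Y)"
    using codim subspace_eq_UNIV_iff_dim_le[OF subspace_span, of "insert y1 Y"] by auto
  with y1 show ?thesis by (rule that)
qed

end

definition matrix_units :: "('a::field^'n^'m) set" where
  "matrix_units = (\<lambda>(i, j). outer_prod (axis i 1) (axis j 1)) ` UNIV"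

lemma mat_span_matrix_units: "mat.span (matrix_units :: ('a::field^'n^'m) set) = UNIV"
proof -
  have unit: "outer_prod (axis i 1) (axis j 1) \<in> (matrix_units :: ('a^'n^'m) set)" for i j
    unfolding matrix_units_def by (rule image_eqI[where x = "(i, j)"]) simp_all
  have "A \<in> mat.span matrix_units" for A :: "'a::field^'n^'m"
    by (subst matrix_eq_sum_matrix_units) (intro mat.span_sum mat.span_scale mat.span_base unit)
  then show ?thesis by auto
qed

definition matrix_basis :: "('a::field^'n^'m) set" where
  "matrix_basis = (SOME B. B \<subseteq> matrix_units \<and> mat.independent B \<and> mat.span B = UNIV)"

lemma matrix_basis:
  fixes B :: "('a::field^'n^'m) set"
  defines "B \<equiv> matrix_basis"
  shows "B \<subseteq> matrix_units \<and> mat.independent B \<and> mat.span B = UNIV"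
proof -
  obtain C :: "('a^'n^'m) set"
    where C: "C \<subseteq> matrix_units" "mat.independent C" "matrix_units \<subseteq> mat.span C"
    by (rule mat.maximal_independent_subset)
  have "mat.span matrix_units \<subseteq> mat.span C" by (rule mat.span_minimal[OF C(3) mat.subspace_span])
  then have "mat.span C = UNIV" unfolding mat_span_matrix_units by blast
  with C have "\<exists>C :: ('a^'n^'m) set. C \<subseteq> matrix_units \<and> mat.independent C \<and> mat.span C = UNIV" by blast
  then show ?thesis unfolding B_def matrix_basis_def by (rule someI_ex)
qed

interpretation mat: finite_dimensional_vector_space
  "mat_scale :: 'a::field \<Rightarrow> 'a^'n^'m \<Rightarrow> 'a^'n^'m" matrix_basis
proof
  show "finite (matrix_basis :: ('a^'n^'m) set)"
    using matrix_basis by (rule finite_subset[OF conjunct1]) (simp add: matrix_units_def)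
qed (use matrix_basis in blast)+

section \<open>Spaces of linear maps\<close>

definition maps_into :: "('a::field^'m) set \<Rightarrow> ('a^'n^'m) set" where
  "maps_into Y = {A. \<forall>x. A *v x \<in> Y}"

definition plus_maps_into :: "('a::field^'n^'m) set \<Rightarrow> ('a^'m) set \<Rightarrow> ('a^'n^'m) set" where
  "plus_maps_into S Y = {s + l | s l. s \<in> S \<and> l \<in> maps_into Y}"

definition maps_sending :: "'a::field^'n \<Rightarrow> ('a^'m) set \<Rightarrow> ('a^'n^'m) set" where
  "maps_sending z W = {A. A *v z \<in> W}"

lemma subspace_maps_into: "vec.subspace Y \<Longrightarrow> mat.subspace (maps_into Y)"
  unfolding mat.subspace_def maps_into_def
  by (auto simp: matrix_vector_mult_add_rdistrib mat_scale_mult_vec vec.subspace_0 vec.subspace_add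
      vec.subspace_scale)

lemma subspace_maps_sending: "vec.subspace W \<Longrightarrow> mat.subspace (maps_sending z W)"
  unfolding mat.subspace_def maps_sending_def
  by (auto simp: matrix_vector_mult_add_rdistrib mat_scale_mult_vec vec.subspace_0 vec.subspace_add
      vec.subspace_scale)

lemma subspace_plus_maps_into:
  "mat.subspace S \<Longrightarrow> vec.subspace Y \<Longrightarrow> mat.subspace (plus_maps_into S Y)"
  unfolding plus_maps_into_def by (intro mat.subspace_sums subspace_maps_into)

lemma maps_into_subset_plus_maps_into: "mat.subspace S \<Longrightarrow> maps_into Y \<subseteq> plus_maps_into S Y"
  unfolding plus_maps_into_def using mat.subspace_0 by force

lemma plus_maps_into_mono: "Y \<subseteq> Y' \<Longrightarrow> plus_maps_into S Y \<subseteq> plus_maps_into S Y'"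
  unfolding plus_maps_into_def maps_into_def by blast

lemma maps_into_zero: "maps_into {0} = {0}"
proof -
  have "A = 0" if "\<forall>x. A *v x = 0" for A :: "'a::field^'n^'m"
  proof -
    have "(A *v axis j 1) $ i = A$i$j" for i j
      by (simp add: matrix_vector_mult_def axis_def if_distrib[of "(*) _"] cong: if_cong)
    then show ?thesis using that by (simp add: vec_eq_iff)
  qed
  then show ?thesis by (auto simp: maps_into_def)
qed

lemma plus_maps_into_zero: "plus_maps_into S {0} = S"
  by (simp add: plus_maps_into_def maps_into_zero)

lemma outer_prod_axis_in_maps_into: "vec.subspace Y \<Longrightarrow> y \<in> Y \<Longrightarrow> outer_prod y (axis j 1) \<in> maps_into Y"
  by (simp add: maps_into_def outer_prod_axis_mult_vec vec.subspace_scale)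

lemma mat_subspace_eq_UNIV_if_outer_prods:
  assumes X: "mat.subspace X" and "\<And>y j. outer_prod y (axis j 1) \<in> X"
  shows "X = UNIV"
proof -
  have "A \<in> X" for A
    by (subst matrix_eq_sum_outer_prod_column) (intro mat.subspace_sum[OF X] assms(2))
  then show ?thesis by blast
qed

lemma maps_sending_span_insert:
  assumes W: "vec.subspace W" and R: "R *v z = w"
  shows "maps_sending z (vec.span (insert w W)) = mat.span (insert R (maps_sending z W))"
proof
  show "maps_sending z (vec.span (insert w W)) \<subseteq> mat.span (insert R (maps_sending z W))"
  proof
    fix A assume "A \<in> maps_sending z (vec.span (insert w W))"
    then obtain c where "A *v z - c *s w \<in> W"
      using vec.in_span_insert_subspace_iff[OF W] by (auto simp: maps_sending_def)
    then have "A - mat_scale c R \<in> maps_sending z W"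
      by (simp add: maps_sending_def matrix_vector_mult_diff_rdistrib mat_scale_mult_vec R)
    then show "A \<in> mat.span (insert R (maps_sending z W))"
      using mat.in_span_insert_subspace_iff[OF subspace_maps_sending[OF W]] by blast
  qed
  have "insert R (maps_sending z W) \<subseteq> maps_sending z (vec.span (insert w W))"
    using R by (auto simp: maps_sending_def intro: vec.span_base)
  then show "mat.span (insert R (maps_sending z W)) \<subseteq> maps_sending z (vec.span (insert w W))"
    by (rule mat.span_minimal) (simp add: subspace_maps_sending)
qed

lemma dim_maps_sending_span_insert:
  assumes z: "z \<noteq> 0" and W: "vec.subspace W" and w: "w \<notin> W"
  shows "mat.dim (maps_sending z (vec.span (insert w W))) = mat.dim (maps_sending z W) + 1"
proof -
  obtain i where i: "z$i \<noteq> 0" using z by (metis vec_eq_iff zero_index)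
  define R where "R = outer_prod ((1 / z$i) *s w) (axis i 1)"
  have R: "R *v z = w" using i by (simp add: R_def outer_prod_axis_mult_vec)
  then have "R \<notin> maps_sending z W" using w by (simp add: maps_sending_def)
  then show ?thesis
    by (simp add: maps_sending_span_insert[OF W R] mat.dim_insert
        mat.span_eq_iff[THEN iffD2, OF subspace_maps_sending[OF W]])
qed

lemma dim_maps_sending:
  fixes z :: "'a::field^'n" and W :: "('a^'m) set"
  assumes z: "z \<noteq> 0" and W: "vec.subspace W"
  shows "mat.dim (maps_sending z W) + vec.dim (UNIV :: ('a^'m) set)
    = mat.dim (UNIV :: ('a^'n^'m) set) + vec.dim W"
proof -
  have codim: "mat.dim (maps_sending z W) + k = mat.dim (UNIV :: ('a^'n^'m) set)"
    if "vec.subspace W" "vec.dim W + k = vec.dim (UNIV :: ('a^'m) set)" for W :: "('a^'m) set" and k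
    using that
  proof (induction k arbitrary: W)
    case 0
    then have "W = UNIV" using vec.subspace_eq_UNIV_iff_dim_le[of W] by simp
    then show ?case by (simp add: maps_sending_def)
  next
    case (Suc k)
    then obtain w where w: "w \<notin> W"
      using vec.subspace_eq_UNIV_iff_dim_le[of W] by auto
    have "vec.dim (vec.span (insert w W)) + k = vec.dim (UNIV :: ('a^'m) set)"
      using Suc.prems w by (simp add: vec.dim_insert vec.span_eq_iff[THEN iffD2, OF Suc.prems(1)])
    then have "mat.dim (maps_sending z (vec.span (insert w W))) + k = mat.dim (UNIV :: ('a^'n^'m) set)"
      using Suc.IH by simp
    then show ?case using dim_maps_sending_span_insert[OF z Suc.prems(1) w] by simp
  qed
  have "vec.dim W \<le> vec.dim (UNIV :: ('a^'m) set)" by (rule vec.dim_subset) simp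
  then have k: "vec.dim W + (vec.dim (UNIV :: ('a^'m) set) - vec.dim W) = vec.dim (UNIV :: ('a^'m) set)"
    by simp
  show ?thesis using codim[OF W k] k by linarith
qed

section \<open>Local maps modulo a subspace\<close>

lemma local_mod_if_column_sections:
  fixes S :: "('a::field^'n^'m) set" and F :: "'a^'n^'m \<Rightarrow> 'a^'m" and Y :: "('a^'m) set"
    and \<sigma> :: "'n \<Rightarrow> 'a^'m \<Rightarrow> 'a^'n^'m" and a :: "'n \<Rightarrow> 'a"
  assumes S: "mat.subspace S" and Y: "vec.subspace Y"
    and F_add: "\<forall>u\<in>S. \<forall>v\<in>S. F (u + v) = F u + F v"
    and F_Y: "\<And>u. u \<in> S \<Longrightarrow> u \<in> maps_into Y \<Longrightarrow> F u \<in> Y"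
    and \<sigma>_S: "\<And>j y. \<sigma> j y \<in> S"
    and \<sigma>_L: "\<And>j y. outer_prod y (axis j 1) - \<sigma> j y \<in> maps_into Y"
    and a: "\<And>j y. F (\<sigma> j y) - a j *s y \<in> Y"
    and s: "s \<in> S"
  shows "F s - s *v (\<chi> j. a j) \<in> Y"
proof -
  define \<sigma>s where "\<sigma>s = (\<Sum>j\<in>UNIV. \<sigma> j (column j s))"
  have \<sigma>s_S: "\<sigma>s \<in> S" unfolding \<sigma>s_def using \<sigma>_S by (intro mat.subspace_sum[OF S])
  have "s - \<sigma>s = (\<Sum>j\<in>UNIV. outer_prod (column j s) (axis j 1)) - \<sigma>s"
    by (simp only: matrix_eq_sum_outer_prod_column[of s, symmetric])
  also have "\<dots> = (\<Sum>j\<in>UNIV. outer_prod (column j s) (axis j 1) - \<sigma> j (column j s))"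
    by (simp add: \<sigma>s_def sum_subtractf)
  also have "\<dots> \<in> maps_into Y" by (intro mat.subspace_sum[OF subspace_maps_into[OF Y]] \<sigma>_L)
  finally have r: "s - \<sigma>s \<in> maps_into Y" .
  have "F s = F ((s - \<sigma>s) + \<sigma>s)" by simp
  also have "\<dots> = F (s - \<sigma>s) + F \<sigma>s"
    using F_add mat.subspace_diff[OF S s \<sigma>s_S] \<sigma>s_S by blast
  also have "F \<sigma>s = (\<Sum>j\<in>UNIV. F (\<sigma> j (column j s)))"
    unfolding \<sigma>s_def using \<sigma>_S by (intro mat.additive_on_subspace_sum[OF S F_add]) simp_all
  finally have "F s - s *v (\<chi> j. a j)
      = F (s - \<sigma>s) + (\<Sum>j\<in>UNIV. F (\<sigma> j (column j s)) - a j *s column j s)"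
    by (simp add: matrix_mult_sum sum_subtractf)
  also have "\<dots> \<in> Y"
    using F_Y[OF mat.subspace_diff[OF S s \<sigma>s_S] r] a
    by (intro vec.subspace_add[OF Y] vec.subspace_sum[OF Y])
  finally show ?thesis .
qed

lemma obtain_column_sections:
  fixes S :: "('a::field^'n^'m) set" and Y :: "('a^'m) set"
  assumes full: "plus_maps_into S Y = UNIV"
  obtains \<sigma> where "\<And>j y. \<sigma> j y \<in> S"
    and "\<And>j y. outer_prod y (axis j 1) - \<sigma> j y \<in> maps_into Y"
proof -
  have ex: "\<exists>s. s \<in> S \<and> outer_prod y (axis j 1) - s \<in> maps_into Y" for j y
  proof -
    have "outer_prod y (axis j 1) \<in> plus_maps_into S Y" using full by simp
    then show ?thesis unfolding plus_maps_into_def by force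
  qed
  define \<sigma> where "\<sigma> j y = (SOME s. s \<in> S \<and> outer_prod y (axis j 1) - s \<in> maps_into Y)" for j y
  have "\<sigma> j y \<in> S \<and> outer_prod y (axis j 1) - \<sigma> j y \<in> maps_into Y" for j y
    unfolding \<sigma>_def
    by (rule someI_ex[where P = "\<lambda>s. s \<in> S \<and> outer_prod y (axis j 1) - s \<in> maps_into Y", OF ex])
  then show ?thesis using that by blast
qed

lemma local_mod_if_plus_maps_into_eq_UNIV:
  fixes S :: "('a::field^'n^'m) set" and F :: "'a^'n^'m \<Rightarrow> 'a^'m" and Y :: "('a^'m) set"
  assumes S: "mat.subspace S" and Y: "vec.subspace Y"
    and F_add: "\<forall>u\<in>S. \<forall>v\<in>S. F (u + v) = F u + F v"
    and full: "plus_maps_into S Y = UNIV"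
    and rc: "\<forall>s\<in>S. \<exists>w. F s - s *v w \<in> Y"
    and codim: "vec.dim Y + 2 \<le> vec.dim (UNIV :: ('a^'m) set)"
  shows "\<exists>x. \<forall>s\<in>S. F s - s *v x \<in> Y"
proof -
  obtain y1 y2 where y1: "y1 \<notin> Y" and y2: "y2 \<notin> vec.span (insert y1 Y)"
    using vec.obtain_pair_independent_mod_subspace[OF Y codim] .
  have F_Y: "F u \<in> Y" if "u \<in> S" "u \<in> maps_into Y" for u
  proof -
    from bspec[OF rc that(1)] obtain w where "F u - u *v w \<in> Y" ..
    moreover have "u *v w \<in> Y" using that(2) by (simp add: maps_into_def)
    ultimately show ?thesis using vec.subspace_add[OF Y] by fastforce
  qed
  obtain \<sigma> where \<sigma>_S: "\<And>j y. \<sigma> j y \<in> S"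
    and \<sigma>_L: "\<And>j y. outer_prod y (axis j 1) - \<sigma> j y \<in> maps_into Y"
    using obtain_column_sections[OF full] by blast
  have eigen: "\<exists>c. F (\<sigma> j y) - c *s y \<in> Y" for j y
  proof -
    from bspec[OF rc \<sigma>_S] obtain w where w: "F (\<sigma> j y) - \<sigma> j y *v w \<in> Y" ..
    have "(outer_prod y (axis j 1) - \<sigma> j y) *v w \<in> Y" using \<sigma>_L by (simp add: maps_into_def)
    with w have "(F (\<sigma> j y) - \<sigma> j y *v w) - (outer_prod y (axis j 1) - \<sigma> j y) *v w \<in> Y"
      by (rule vec.subspace_diff[OF Y])
    then show ?thesis by (auto simp: matrix_vector_mult_diff_rdistrib outer_prod_axis_mult_vec)
  qed
  have additive: "F (\<sigma> j (y + y')) - F (\<sigma> j y) - F (\<sigma> j y') \<in> Y" for j y y'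
  proof -
    define u where "u = \<sigma> j (y + y') - \<sigma> j y - \<sigma> j y'"
    have u_S: "u \<in> S" unfolding u_def using \<sigma>_S by (intro mat.subspace_diff[OF S])
    have "u = (outer_prod y (axis j 1) - \<sigma> j y) + (outer_prod y' (axis j 1) - \<sigma> j y')
        - (outer_prod (y + y') (axis j 1) - \<sigma> j (y + y'))"
      by (simp add: u_def outer_prod_add_left algebra_simps)
    also have "\<dots> \<in> maps_into Y"
      using subspace_maps_into[OF Y] \<sigma>_L by (metis mat.subspace_add mat.subspace_diff)
    finally have "F u \<in> Y" using F_Y u_S by blast
    moreover have "F (\<sigma> j (y + y')) = F (u + (\<sigma> j y + \<sigma> j y'))" by (simp add: u_def)
    then have "F (\<sigma> j (y + y')) = F u + (F (\<sigma> j y) + F (\<sigma> j y'))"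
      using F_add u_S \<sigma>_S mat.subspace_add[OF S] by simp
    ultimately show ?thesis by simp
  qed
  have "\<exists>a. \<forall>y. F (\<sigma> j y) - a *s y \<in> Y" for j
    by (rule vec.scalar_mod_subspace_if_all_eigen[OF Y y1 y2 eigen[of j] additive[of j]])
  then obtain a where "\<And>j y. F (\<sigma> j y) - a j *s y \<in> Y" by (metis choice)
  then show ?thesis using local_mod_if_column_sections[OF S Y F_add F_Y \<sigma>_S \<sigma>_L] by blast
qed

lemma dim_plus_maps_into_span_insert:
  assumes S: "mat.subspace S" and Y: "vec.subspace Y"
    and out: "outer_prod y (axis j 1) \<notin> plus_maps_into S Y"
  shows "y \<notin> Y"
    and "mat.dim (plus_maps_into S Y) < mat.dim (plus_maps_into S (vec.span (insert y Y)))"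
proof -
  show "y \<notin> Y"
    using out maps_into_subset_plus_maps_into[OF S] outer_prod_axis_in_maps_into[OF Y] by blast
  have "Y \<subseteq> vec.span (insert y Y)" by (meson subset_insertI vec.span_superset order_trans)
  then have sub: "plus_maps_into S Y \<subseteq> plus_maps_into S (vec.span (insert y Y))"
    by (rule plus_maps_into_mono)
  have "outer_prod y (axis j 1) \<in> plus_maps_into S (vec.span (insert y Y))"
    using maps_into_subset_plus_maps_into[OF S]
      outer_prod_axis_in_maps_into[OF vec.subspace_span vec.span_base[OF insertI1]] by blast
  with sub out have "plus_maps_into S Y \<subset> plus_maps_into S (vec.span (insert y Y))" by blast
  then show "mat.dim (plus_maps_into S Y) < mat.dim (plus_maps_into S (vec.span (insert y Y)))"
    using mat.dim_psubset[of "plus_maps_into S Y" "plus_maps_into S (vec.span (insert y Y))"]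
    by (simp add: mat.span_eq_iff[THEN iffD2, OF subspace_plus_maps_into[OF S Y]]
        mat.span_eq_iff[THEN iffD2, OF subspace_plus_maps_into[OF S vec.subspace_span]])
qed

lemma obtain_outer_prod_axis_not_in:
  assumes T: "mat.subspace T" and y1: "outer_prod y1 (axis j 1) \<notin> T"
    and Y1: "vec.subspace Y1" and y1_Y1: "y1 \<in> Y1" and w: "w \<notin> Y1"
  obtains y2 where "y2 \<notin> Y1" and "outer_prod y2 (axis j 1) \<notin> T"
proof (cases "outer_prod w (axis j 1) \<in> T")
  case True
  have "w + y1 \<notin> Y1"
  proof
    assume "w + y1 \<in> Y1"
    from vec.subspace_diff[OF Y1 this y1_Y1] w show False by simp
  qed
  moreover have "outer_prod (w + y1) (axis j 1) \<notin> T"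
  proof
    assume "outer_prod (w + y1) (axis j 1) \<in> T"
    from mat.subspace_diff[OF T this True] y1 show False by (simp add: outer_prod_add_left)
  qed
  ultimately show ?thesis by (rule that)
qed (use w that in blast)

lemma local_mod_if_local_mod_span_insert_both:
  fixes S :: "('a::field^'n^'m) set" and F :: "'a^'n^'m \<Rightarrow> 'a^'m" and Y :: "('a^'m) set"
  assumes S: "mat.subspace S" and Y: "vec.subspace Y"
    and y2: "y2 \<notin> vec.span (insert y1 Y)"
    and x1: "\<forall>s\<in>S. F s - s *v x1 \<in> vec.span (insert y1 Y)"
    and x2: "\<forall>s\<in>S. F s - s *v x2 \<in> vec.span (insert y2 Y)"
    and dim: "mat.dim (UNIV :: ('a^'n^'m) set) + vec.dim Y + 2
      < mat.dim (plus_maps_into S (vec.span (insert y1 Y))) + vec.dim (UNIV :: ('a^'m) set)"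
  shows "\<forall>s\<in>S. F s - s *v x1 \<in> Y"
proof -
  define Y1 where "Y1 = vec.span (insert y1 Y)"
  define W where "W = vec.span (insert y2 Y1)"
  have W: "vec.subspace W" unfolding W_def by simp
  have Y1_W: "Y1 \<subseteq> W" unfolding W_def by (meson subset_insertI vec.span_superset order_trans)
  have Y_Y1: "Y \<subseteq> Y1" unfolding Y1_def by (meson subset_insertI vec.span_superset order_trans)
  have "insert y2 Y \<subseteq> W" using Y_Y1 Y1_W vec.span_base[of y2 "insert y2 Y1"] by (auto simp: W_def)
  then have Y2_W: "vec.span (insert y2 Y) \<subseteq> W" by (rule vec.span_minimal[OF _ W])
  have "vec.dim W \<le> vec.dim Y1 + 1" "vec.dim Y1 \<le> vec.dim Y + 1"
    unfolding W_def Y1_def by (simp_all add: vec.dim_insert)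
  then have dim_W: "vec.dim W \<le> vec.dim Y + 2" by simp
  have "x1 = x2"
  proof (rule ccontr)
    txt \<open>Otherwise all of \<open>S + L(U, Y\<^sub>1)\<close> sends \<open>x\<^sub>1 - x\<^sub>2 \<noteq> 0\<close> into \<open>W\<close>, which is too
      small by the dimension hypothesis.\<close>
    assume "x1 \<noteq> x2"
    then have z: "x1 - x2 \<noteq> 0" by simp
    have "plus_maps_into S Y1 \<subseteq> maps_sending (x1 - x2) W"
    proof
      fix t assume "t \<in> plus_maps_into S Y1"
      then obtain s l where t: "t = s + l" and s: "s \<in> S" and l: "l \<in> maps_into Y1"
        unfolding plus_maps_into_def by blast
      have "F s - s *v x2 \<in> W" "F s - s *v x1 \<in> W"
        using x1 x2 s Y1_W Y2_W unfolding Y1_def by auto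
      then have "(F s - s *v x2) - (F s - s *v x1) \<in> W" by (rule vec.subspace_diff[OF W])
      moreover have "l *v (x1 - x2) \<in> W" using l Y1_W unfolding maps_into_def by auto
      ultimately have "s *v (x1 - x2) + l *v (x1 - x2) \<in> W"
        using vec.subspace_add[OF W] by (simp add: matrix_vector_mult_diff_distrib)
      then show "t \<in> maps_sending (x1 - x2) W"
        by (simp add: maps_sending_def t matrix_vector_mult_add_rdistrib)
    qed
    then have "mat.dim (plus_maps_into S Y1) \<le> mat.dim (maps_sending (x1 - x2) W)"
      by (rule mat.dim_subset)
    then show False using dim_maps_sending[OF z W] dim_W dim unfolding Y1_def by linarith
  qed
  then show ?thesis
    using vec.in_subspace_if_in_span_insert_both[OF Y y2] x1 x2 by simp
qed

lemma local_mod_if_local_mod_span_insert: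
  fixes S :: "('a::field^'n^'m) set" and F :: "'a^'n^'m \<Rightarrow> 'a^'m" and Y :: "('a^'m) set"
  assumes S: "mat.subspace S" and Y: "vec.subspace Y"
    and y1: "outer_prod y1 (axis j 1) \<notin> plus_maps_into S Y"
    and extend: "\<And>y. outer_prod y (axis j 1) \<notin> plus_maps_into S Y
      \<Longrightarrow> \<exists>x. \<forall>s\<in>S. F s - s *v x \<in> vec.span (insert y Y)"
    and codim: "mat.dim (UNIV :: ('a^'n^'m) set) + vec.dim Y + 2
      \<le> mat.dim (plus_maps_into S Y) + vec.dim (UNIV :: ('a^'m) set)"
  shows "\<exists>x. \<forall>s\<in>S. F s - s *v x \<in> Y"
proof -
  have T: "mat.subspace (plus_maps_into S Y)" by (rule subspace_plus_maps_into[OF S Y])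
  define Y1 where "Y1 = vec.span (insert y1 Y)"
  have "mat.dim (plus_maps_into S Y) < mat.dim (UNIV :: ('a^'n^'m) set)"
    using y1 mat.subspace_eq_UNIV_iff_dim_le[OF T] by auto
  moreover have "vec.dim Y1 = vec.dim Y + 1"
    using dim_plus_maps_into_span_insert(1)[OF S Y y1]
    by (simp add: Y1_def vec.dim_insert vec.span_eq_iff[THEN iffD2, OF Y])
  ultimately obtain w where "w \<notin> Y1"
    using codim vec.subspace_eq_UNIV_iff_dim_le[of Y1] by (fastforce simp: Y1_def)
  then obtain y2 where y2: "y2 \<notin> Y1" and y2_out: "outer_prod y2 (axis j 1) \<notin> plus_maps_into S Y"
    using obtain_outer_prod_axis_not_in[OF T y1] vec.span_base[of y1 "insert y1 Y"]
    unfolding Y1_def by blast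
  obtain x1 where x1: "\<forall>s\<in>S. F s - s *v x1 \<in> Y1" using extend[OF y1] unfolding Y1_def ..
  obtain x2 where x2: "\<forall>s\<in>S. F s - s *v x2 \<in> vec.span (insert y2 Y)" using extend[OF y2_out] ..
  have "mat.dim (UNIV :: ('a^'n^'m) set) + vec.dim Y + 2
      < mat.dim (plus_maps_into S Y1) + vec.dim (UNIV :: ('a^'m) set)"
    using codim dim_plus_maps_into_span_insert(2)[OF S Y y1] unfolding Y1_def by linarith
  then show ?thesis
    using local_mod_if_local_mod_span_insert_both[OF S Y _ x1[unfolded Y1_def] x2] y2
    unfolding Y1_def by blast
qed

lemma local_mod_if_codim:
  fixes S :: "('a::field^'n^'m) set" and F :: "'a^'n^'m \<Rightarrow> 'a^'m" and Y :: "('a^'m) set"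
  assumes S: "mat.subspace S" and F_add: "\<forall>u\<in>S. \<forall>v\<in>S. F (u + v) = F u + F v"
    and "vec.subspace Y"
    and "mat.dim (UNIV :: ('a^'n^'m) set) + vec.dim Y + 2
      \<le> mat.dim (plus_maps_into S Y) + vec.dim (UNIV :: ('a^'m) set)"
    and "\<forall>s\<in>S. \<exists>w. F s - s *v w \<in> Y"
  shows "\<exists>x. \<forall>s\<in>S. F s - s *v x \<in> Y"
  using assms(3-5)
proof (induction "vec.dim (UNIV :: ('a^'m) set) - vec.dim Y" arbitrary: Y rule: less_induct)
  case less
  note Y = less.prems(1) and codim = less.prems(2) and rc = less.prems(3)
  have T: "mat.subspace (plus_maps_into S Y)" by (rule subspace_plus_maps_into[OF S Y])
  have dim_T: "mat.dim (plus_maps_into S Y) \<le> mat.dim (UNIV :: ('a^'n^'m) set)"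
    by (rule mat.dim_subset) simp
  show ?case
  proof (cases "plus_maps_into S Y = UNIV")
    case True
    then show ?thesis
      using local_mod_if_plus_maps_into_eq_UNIV[OF S Y F_add True rc] codim dim_T by simp
  next
    case False
    then obtain y1 j where y1: "outer_prod y1 (axis j 1) \<notin> plus_maps_into S Y"
      using mat_subspace_eq_UNIV_if_outer_prods[OF T] by blast
    show ?thesis
    proof (rule local_mod_if_local_mod_span_insert[OF S Y y1 _ codim])
      fix y assume y: "outer_prod y (axis j 1) \<notin> plus_maps_into S Y"
      note dim_T' = dim_plus_maps_into_span_insert(2)[OF S Y y]
      have dim_Y': "vec.dim (vec.span (insert y Y)) = vec.dim Y + 1"
        using dim_plus_maps_into_span_insert(1)[OF S Y y]
        by (simp add: vec.dim_insert vec.span_eq_iff[THEN iffD2, OF Y])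
      show "\<exists>x. \<forall>s\<in>S. F s - s *v x \<in> vec.span (insert y Y)"
      proof (rule less.hyps)
        show "vec.dim (UNIV :: ('a^'m) set) - vec.dim (vec.span (insert y Y))
            < vec.dim (UNIV :: ('a^'m) set) - vec.dim Y"
          using codim dim_T dim_T' dim_Y' by linarith
        show "mat.dim (UNIV :: ('a^'n^'m) set) + vec.dim (vec.span (insert y Y)) + 2
            \<le> mat.dim (plus_maps_into S (vec.span (insert y Y))) + vec.dim (UNIV :: ('a^'m) set)"
          using codim dim_T' dim_Y' by linarith
        show "\<forall>s\<in>S. \<exists>w. F s - s *v w \<in> vec.span (insert y Y)"
          using rc vec.span_superset by blast
      qed (rule vec.subspace_span)
    qed
  qed
qed

section \<open>From subspaces to subgroups\<close>

lemma local_if_codim: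
  fixes S :: "('a::field^'n^'m) set" and F :: "'a^'n^'m \<Rightarrow> 'a^'m"
  assumes S: "mat.subspace S" and F_add: "\<forall>u\<in>S. \<forall>v\<in>S. F (u + v) = F u + F v"
    and F_rc: "range_compatible S F"
    and codim: "mat.dim (UNIV :: ('a^'n^'m) set) + 2 \<le> mat.dim S + vec.dim (UNIV :: ('a^'m) set)"
  shows "\<exists>x. \<forall>s\<in>S. F s = s *v x"
proof -
  have "\<forall>s\<in>S. \<exists>w. F s - s *v w \<in> {0}" using F_rc unfolding range_compatible_def by auto
  then obtain x where "\<forall>s\<in>S. F s - s *v x \<in> {0}"
    using local_mod_if_codim[OF S F_add vec.subspace_single_0] codim
    by (auto simp: plus_maps_into_zero)
  then show ?thesis by auto
qed

lemma eq_if_mult_vec_eq_on_subspace: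
  fixes S :: "('a::field^'n^'m) set"
  assumes codim: "mat.dim (UNIV :: ('a^'n^'m) set) < mat.dim S + vec.dim (UNIV :: ('a^'m) set)"
    and eq: "\<forall>s\<in>S. s *v x = s *v x'"
  shows "x = x'"
proof (rule ccontr)
  assume "x \<noteq> x'"
  then have z: "x - x' \<noteq> 0" by simp
  have "S \<subseteq> maps_sending (x - x') {0}"
    using eq by (auto simp: maps_sending_def matrix_vector_mult_diff_distrib)
  then have "mat.dim S \<le> mat.dim (maps_sending (x - x') {0} :: ('a^'n^'m) set)"
    by (rule mat.dim_subset)
  moreover have "vec.dim ({0} :: ('a^'m) set) = 0" by simp
  ultimately show False
    using dim_maps_sending[of "x - x'" "{0} :: ('a^'m) set", OF z vec.subspace_single_0] codim
    by linarith
qed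

lemma extension_value_in_range:
  assumes T: "additive_subgroup T" and S: "mat.subspace S" and S_T: "S \<subseteq> T"
    and F_hom: "\<forall>s\<in>T. \<forall>t\<in>T. F (s + t) = F s + F t" and F_rc: "range_compatible T F"
    and x: "\<forall>s\<in>S. F s = s *v x" and t: "t \<in> T" and s: "s \<in> S"
  shows "s *v x + c *s F t \<in> range (\<lambda>w. (s + mat_scale c t) *v w)"
proof (cases "c = 0")
  case False
  define s' where "s' = mat_scale (1 / c) s"
  have s': "s' \<in> S" unfolding s'_def using s by (rule mat.subspace_scale[OF S])
  then have "t + s' \<in> T" using T t S_T unfolding additive_subgroup_def by blast
  then obtain w where w: "F (t + s') = (t + s') *v w" using F_rc unfolding range_compatible_def by blast
  have "s *v x + c *s F t = c *s (F t + s' *v x)"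
    using False by (simp add: s'_def mat_scale_mult_vec vec_eq_iff algebra_simps)
  also have "\<dots> = c *s F (t + s')" using F_hom t s' S_T x by auto
  also have "\<dots> = mat_scale c (t + s') *v w" by (simp add: w mat_scale_mult_vec)
  also have "mat_scale c (t + s') = s + mat_scale c t"
    using False by (simp add: s'_def mat.scale_right_distrib)
  finally show ?thesis by auto
qed auto

lemma local_on_span_insert:
  fixes T S :: "('a::field^'n^'m) set" and F :: "'a^'n^'m \<Rightarrow> 'a^'m"
  assumes T: "additive_subgroup T" and S: "mat.subspace S" and S_T: "S \<subseteq> T"
    and F_hom: "\<forall>s\<in>T. \<forall>t\<in>T. F (s + t) = F s + F t" and F_rc: "range_compatible T F"
    and codim: "mat.dim (UNIV :: ('a^'n^'m) set) + 2 \<le> mat.dim S + vec.dim (UNIV :: ('a^'m) set)"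
    and x: "\<forall>s\<in>S. F s = s *v x" and t: "t \<in> T" "t \<notin> S"
  shows "\<exists>x'. (\<forall>s\<in>S. s *v x = s *v x') \<and> F t = t *v x'"
proof -
  obtain coord where coord_S: "\<And>u. u \<in> mat.span (insert t S) \<Longrightarrow> u - mat_scale (coord u) t \<in> S"
    and coord_eq: "\<And>u c. u - mat_scale c t \<in> S \<Longrightarrow> coord u = c"
    and coord_add: "\<And>u v. u \<in> mat.span (insert t S) \<Longrightarrow> v \<in> mat.span (insert t S)
      \<Longrightarrow> coord (u + v) = coord u + coord v"
    by (rule mat.span_insert_coordinate[OF S t(2)]) blast
  txt \<open>The linear map on \<open>S + K t\<close> that agrees with \<open>x\<close> on \<open>S\<close> and sends \<open>t\<close> to \<open>F t\<close>.\<close>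
  define H where "H u = (u - mat_scale (coord u) t) *v x + coord u *s F t" for u
  have H_add: "\<forall>u\<in>mat.span (insert t S). \<forall>v\<in>mat.span (insert t S). H (u + v) = H u + H v"
  proof (intro ballI)
    fix u v assume u: "u \<in> mat.span (insert t S)" and v: "v \<in> mat.span (insert t S)"
    have split: "u + v - mat_scale (coord u + coord v) t
        = (u - mat_scale (coord u) t) + (v - mat_scale (coord v) t)"
      by (simp add: mat.scale_left_distrib)
    show "H (u + v) = H u + H v"
      by (simp add: H_def coord_add[OF u v] split matrix_vector_mult_add_rdistrib vector_add_ldistrib)
  qed
  have H_rc: "range_compatible (mat.span (insert t S)) H"
    unfolding range_compatible_def
  proof
    fix u assume "u \<in> mat.span (insert t S)"
    from extension_value_in_range[OF T S S_T F_hom F_rc x t(1) coord_S[OF this], of "coord u"]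
    show "H u \<in> range (\<lambda>w. u *v w)" by (simp add: H_def)
  qed
  have "mat.dim S \<le> mat.dim (mat.span (insert t S))"
    by (rule mat.dim_subset) (meson subset_insertI mat.span_superset order_trans)
  then have "mat.dim (UNIV :: ('a^'n^'m) set) + 2
      \<le> mat.dim (mat.span (insert t S)) + vec.dim (UNIV :: ('a^'m) set)"
    using codim by linarith
  from local_if_codim[OF mat.subspace_span H_add H_rc this]
  obtain x' where x': "\<forall>u\<in>mat.span (insert t S). H u = u *v x'" ..
  have "s *v x = s *v x'" if s: "s \<in> S" for s
  proof -
    have "H s = s *v x" using s coord_eq[of s 0] by (simp add: H_def)
    moreover have "s \<in> mat.span (insert t S)" using s by (simp add: mat.span_base)
    ultimately show ?thesis using x' by simp
  qed
  moreover have "F t = t *v x'"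
  proof -
    have "H t = F t" using coord_eq[of t 1] mat.subspace_0[OF S] by (simp add: H_def)
    moreover have "t \<in> mat.span (insert t S)" by (simp add: mat.span_base)
    ultimately show ?thesis using x' by simp
  qed
  ultimately show ?thesis by blast
qed

lemma local_extends_to_group:
  fixes T S :: "('a::field^'n^'m) set" and F :: "'a^'n^'m \<Rightarrow> 'a^'m"
  assumes T: "additive_subgroup T" and S: "mat.subspace S" and S_T: "S \<subseteq> T"
    and F_hom: "\<forall>s\<in>T. \<forall>t\<in>T. F (s + t) = F s + F t" and F_rc: "range_compatible T F"
    and codim: "mat.dim (UNIV :: ('a^'n^'m) set) + 2 \<le> mat.dim S + vec.dim (UNIV :: ('a^'m) set)"
    and x: "\<forall>s\<in>S. F s = s *v x" and t: "t \<in> T"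
  shows "F t = t *v x"
proof (cases "t \<in> S")
  case False
  then obtain x' where eq: "\<forall>s\<in>S. s *v x = s *v x'" and Ft: "F t = t *v x'"
    using local_on_span_insert[OF T S S_T F_hom F_rc codim x t] by blast
  have "mat.dim (UNIV :: ('a^'n^'m) set) < mat.dim S + vec.dim (UNIV :: ('a^'m) set)"
    using codim by linarith
  then have "x = x'" using eq by (rule eq_if_mult_vec_eq_on_subspace)
  with Ft show ?thesis by simp
qed (use x in blast)

theorem theorem2p8:
  fixes T S :: "('a::field ^ 'n ^ 'm) set"
    and F :: "'a ^ 'n ^ 'm \<Rightarrow> 'a ^ 'm"
  assumes T_grp: "additive_subgroup T"
    and S_sub: "module.subspace mat_scale S"
    and S_T: "S \<subseteq> T"
    and codim: "int (vector_space.dim mat_scale (UNIV :: ('a ^ 'n ^ 'm) set))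
                  - int (vector_space.dim mat_scale S)
                \<le> int (vector_space.dim (\<lambda>(c::'a) (v::'a^'m). c *s v) UNIV) - 2"
    and F_hom: "\<forall>s\<in>T. \<forall>t\<in>T. F (s + t) = F s + F t"
    and F_rc: "range_compatible T F"
  shows "\<exists>x :: 'a ^ 'n. \<forall>t\<in>T. F t = t *v x"
proof -
  have codim': "mat.dim (UNIV :: ('a^'n^'m) set) + 2 \<le> mat.dim S + vec.dim (UNIV :: ('a^'m) set)"
    using codim by simp
  have "\<forall>u\<in>S. \<forall>v\<in>S. F (u + v) = F u + F v" using F_hom S_T by blast
  moreover have "range_compatible S F" using F_rc S_T unfolding range_compatible_def by blast
  ultimately obtain x where "\<forall>s\<in>S. F s = s *v x"
    using local_if_codim[OF S_sub _ _ codim'] by blast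
  then have "F t = t *v x" if "t \<in> T" for t
    using local_extends_to_group[OF T_grp S_sub S_T F_hom F_rc codim' _ that] by blast
  then show ?thesis by blast
qed

end
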